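(* Let $G$ be a finitely generated group that admits a surjective homomorphism onto $\mathbb{Z}^2$. Then for every finite symmetric generating set $X$ of $G$, the geodesic growth of $G$ with respect to $X$ is exponential: there exists $b>1$ with $\Gamma_{G,X}(n)\ge b^n$ for all $n\in\mathbb{N}$.
   Context: Generating sets may contain repeated elements (formally, a finite symmetric alphabet with an epimorphism from the free monoid onto $G$). A word over $X$ is a geodesic if its length equals the word length of the element it represents; $\Gamma_{G,X}(n)$ is the number of geodesic words over $X$ of length at most $n$. *)

theory Defs
  imports "HOL-Algebra.Algebra"
begin

text \<open>A (multi-)generating alphabet: a finite set of letters A with an evaluation
map e into the group. Words are lists of letters; evaluation is the monoid
homomorphism from the free monoid on A to G.\<close>

definition word_eval :: "('a, 'm) monoid_scheme \<Rightarrow> ('x \<Rightarrow> 'a) \<Rightarrow> 'x list \<Rightarrow> 'a" where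
  "word_eval G e w = foldr (\<lambda>x g. e x \<otimes>\<^bsub>G\<^esub> g) w \<one>\<^bsub>G\<^esub>"

definition fin_sym_gen_alphabet :: "('a, 'm) monoid_scheme \<Rightarrow> 'x set \<Rightarrow> ('x \<Rightarrow> 'a) \<Rightarrow> bool" where
  "fin_sym_gen_alphabet G A e \<longleftrightarrow>
     finite A \<and> e ` A \<subseteq> carrier G \<and>
     (\<forall>x\<in>A. \<exists>y\<in>A. e y = m_inv G (e x)) \<and>
     (\<forall>g\<in>carrier G. \<exists>w\<in>lists A. word_eval G e w = g)"

definition word_length :: "('a, 'm) monoid_scheme \<Rightarrow> 'x set \<Rightarrow> ('x \<Rightarrow> 'a) \<Rightarrow> 'a \<Rightarrow> nat" where
  "word_length G A e g = (LEAST n. \<exists>w\<in>lists A. length w = n \<and> word_eval G e w = g)"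

definition geodesic :: "('a, 'm) monoid_scheme \<Rightarrow> 'x set \<Rightarrow> ('x \<Rightarrow> 'a) \<Rightarrow> 'x list \<Rightarrow> bool" where
  "geodesic G A e w \<longleftrightarrow> w \<in> lists A \<and> length w = word_length G A e (word_eval G e w)"

definition geodesic_growth :: "('a, 'm) monoid_scheme \<Rightarrow> 'x set \<Rightarrow> ('x \<Rightarrow> 'a) \<Rightarrow> nat \<Rightarrow> nat" where
  "geodesic_growth G A e n = card {w. geodesic G A e w \<and> length w \<le> n}"

definition finitely_generated_group :: "('a, 'm) monoid_scheme \<Rightarrow> bool" where
  "finitely_generated_group G \<longleftrightarrow>
     (\<exists>S. finite S \<and> S \<subseteq> carrier G \<and> generate G S = carrier G)"

definition Z2_group :: "(int \<times> int) monoid" where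
  "Z2_group = integer_group \<times>\<times> integer_group"

end

theory Submission
  imports Defs
begin

text \<open>A surjection \<open>\<phi> : G \<rightarrow> \<int>\<^sup>2\<close> maps the letters to a finite symmetric set spanning
  \<open>\<real>\<^sup>2\<close>. An edge of its convex hull lies on a line \<open>f = M\<close> with \<open>f\<close> linear, \<open>M > 0\<close> and
  \<open>f \<le> M\<close> at every letter; choose two distinct letters \<open>a\<close>, \<open>b\<close> on that edge. As \<open>f \<circ> \<phi>\<close>
  is additive, a word of length \<open>n\<close> has value at most \<open>n M\<close>, with equality for all words
  over \<open>{a, b}\<close>. Hence these \<open>2\<^sup>n\<close> words of length \<open>n\<close> are geodesic.\<close>

text \<open>Turn the vertical supporting line through \<open>p\<close> about \<open>p\<close>: the first point of \<open>P\<close> it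
  meets above \<open>p\<close> is one of least slope \<open>t\<close>, and the line \<open>x + t y = const\<close> still supports \<open>P\<close>.\<close>
lemma supporting_slope_above_unique_fst_max:
  fixes P :: "('a::linordered_field \<times> 'a) set"
  assumes fin: "finite P" and p: "p \<in> P" and p_max: "\<forall>r\<in>P - {p}. fst r < fst p"
    and q: "q \<in> P" and q_above: "snd p < snd q"
  shows "\<exists>t. \<exists>q'\<in>P. q' \<noteq> p \<and> fst q' + t * snd q' = fst p + t * snd p \<and>
           (\<forall>r\<in>P. fst r + t * snd r \<le> fst p + t * snd p)"
proof -
  define S where "S = {r\<in>P. snd p < snd r}"
  define slope where "slope r = (fst p - fst r) / (snd r - snd p)" for r
  define t where "t = Min (slope ` S)"
  have "finite S" "q \<in> S" using fin q q_above by (auto simp: S_def)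
  then have "t \<in> slope ` S" unfolding t_def by (intro Min_in) auto
  then obtain q' where q': "q' \<in> S" "t = slope q'" by blast
  have t_le: "t \<le> slope r" if "r \<in> S" for r
    using \<open>finite S\<close> that by (simp add: t_def)
  have S_below: "fst r < fst p" if "r \<in> S" for r
    using that p_max by (auto simp: S_def)
  have "0 < t" using q' S_below[OF q'(1)] by (simp add: S_def slope_def)
  show ?thesis
  proof (intro exI bexI conjI ballI)
    show "q' \<in> P" "q' \<noteq> p" using q' by (auto simp: S_def)
    show "fst q' + t * snd q' = fst p + t * snd p"
      using q' by (simp add: S_def slope_def field_simps)
  next
    fix r assume "r \<in> P"
    show "fst r + t * snd r \<le> fst p + t * snd p"
    proof (cases "r \<in> S")
      case True
      then have "0 < snd r - snd p" by (simp add: S_def)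
      with t_le[OF True] have "t * (snd r - snd p) \<le> fst p - fst r"
        by (simp add: slope_def pos_le_divide_eq)
      then show ?thesis by (simp add: algebra_simps)
    next
      case False
      with \<open>r \<in> P\<close> have "t * snd r \<le> t * snd p"
        using \<open>0 < t\<close> by (simp add: S_def)
      moreover have "fst r \<le> fst p"
        using \<open>r \<in> P\<close> p_max by (cases "r = p") (simp_all add: less_imp_le)
      ultimately show ?thesis by simp
    qed
  qed
qed

lemma supporting_line_through_two_points:
  fixes P :: "('a::linordered_field \<times> 'a) set"
  assumes fin: "finite P" and r: "r \<in> P" and s: "s \<in> P" and rs: "snd r \<noteq> snd s"
  shows "\<exists>t p q. p \<in> P \<and> q \<in> P \<and> p \<noteq> q \<and> fst q + t * snd q = fst p + t * snd p \<and>
           (\<forall>r\<in>P. fst r + t * snd r \<le> fst p + t * snd p)"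
proof -
  have "Max (fst ` P) \<in> fst ` P" using fin r by (intro Max_in) auto
  then obtain p where p: "p \<in> P" "fst p = Max (fst ` P)" by force
  have fst_le: "\<forall>r\<in>P. fst r \<le> fst p" using p fin by simp
  show ?thesis
  proof (cases "\<exists>q\<in>P. q \<noteq> p \<and> fst q = fst p")
    case True
    then obtain q where "q \<in> P" "q \<noteq> p" "fst q = fst p" by blast
    with p(1) fst_le show ?thesis
      by (intro exI[of _ 0] exI[of _ p] exI[of _ q] conjI) auto
  next
    case False
    with fst_le have unique: "\<forall>r\<in>P - {p}. fst r < fst p"
      by (metis Diff_iff insertCI order_le_less)
    from rs obtain q where q: "q \<in> P" "snd q \<noteq> snd p"
      using r s by metis
    show ?thesis
    proof (cases "snd p < snd q")
      case True
      with supporting_slope_above_unique_fst_max[OF fin p(1) unique q(1)] p(1)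
      show ?thesis by blast
    next
      case False
      \<comment> \<open>Reflect in the first axis to put \<open>q\<close> above \<open>p\<close>.\<close>
      define \<rho> :: "'a \<times> 'a \<Rightarrow> 'a \<times> 'a" where "\<rho> = apsnd uminus"
      have \<rho>\<rho>: "\<rho> (\<rho> x) = x" for x by (cases x) (simp add: \<rho>_def)
      have "\<forall>r\<in>\<rho> ` P - {\<rho> p}. fst r < fst (\<rho> p)"
      proof
        fix x assume "x \<in> \<rho> ` P - {\<rho> p}"
        then obtain x\<^sub>0 where "x\<^sub>0 \<in> P - {p}" "x = \<rho> x\<^sub>0" by blast
        with unique show "fst x < fst (\<rho> p)" by (simp add: \<rho>_def)
      qed
      moreover have "snd (\<rho> p) < snd (\<rho> q)" using False q(2) by (simp add: \<rho>_def)
      ultimately obtain t q' where q': "q' \<in> \<rho> ` P" "q' \<noteq> \<rho> p"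
          "fst q' + t * snd q' = fst (\<rho> p) + t * snd (\<rho> p)"
          "\<forall>r\<in>\<rho> ` P. fst r + t * snd r \<le> fst (\<rho> p) + t * snd (\<rho> p)"
        using supporting_slope_above_unique_fst_max[of "\<rho> ` P" "\<rho> p" "\<rho> q"] fin p(1) q(1)
        by blast
      show ?thesis
      proof (rule exI[of _ "- t"], rule exI[of _ p], rule exI[of _ "\<rho> q'"], intro conjI ballI)
        show "p \<in> P" "\<rho> q' \<in> P" "p \<noteq> \<rho> q'" using p(1) q'(1,2) \<rho>\<rho> by auto
        show "fst (\<rho> q') + - t * snd (\<rho> q') = fst p + - t * snd p"
          using q'(3) by (simp add: \<rho>_def)
        fix r assume "r \<in> P"
        then show "fst r + - t * snd r \<le> fst p + - t * snd p"
          using q'(4) by (auto simp: \<rho>_def)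
      qed
    qed
  qed
qed

lemma supporting_value_pos:
  fixes P :: "('a::linordered_field \<times> 'a) set"
  assumes symmetric: "\<forall>r\<in>P. (- fst r, - snd r) \<in> P"
    and spanning: "\<forall>\<alpha> \<beta>. (\<forall>r\<in>P. \<alpha> * fst r + \<beta> * snd r = 0) \<longrightarrow> \<alpha> = 0 \<and> \<beta> = 0"
    and bound: "\<forall>r\<in>P. fst r + t * snd r \<le> c"
  shows "0 < c"
proof (rule ccontr)
  assume "\<not> 0 < c"
  have "fst r + t * snd r = 0" if "r \<in> P" for r
  proof -
    have "- fst r + t * - snd r \<le> c" using bound symmetric that by force
    with bound[rule_format, OF that] \<open>\<not> 0 < c\<close> show ?thesis by simp
  qed
  then show False using spanning[rule_format, of 1 t] by simp
qed

lemma word_eval_Nil [simp]: "word_eval G e [] = \<one>\<^bsub>G\<^esub>"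
  by (simp add: word_eval_def)

lemma word_eval_Cons [simp]: "word_eval G e (x # w) = e x \<otimes>\<^bsub>G\<^esub> word_eval G e w"
  by (simp add: word_eval_def)

lemma (in monoid) word_eval_closed:
  "e ` A \<subseteq> carrier G \<Longrightarrow> w \<in> lists A \<Longrightarrow> word_eval G e w \<in> carrier G"
  by (induction w) auto

lemma (in monoid) additive_one:
  fixes h :: "'a \<Rightarrow> 'c::group_add"
  assumes "\<forall>x\<in>carrier G. \<forall>y\<in>carrier G. h (x \<otimes> y) = h x + h y"
  shows "h \<one> = 0"
proof -
  have "h \<one> = h \<one> + h \<one>" using assms by (metis one_closed r_one)
  then show ?thesis by (metis add.right_neutral add_left_cancel)
qed

lemma (in monoid) additive_word_eval:
  fixes h :: "'a \<Rightarrow> 'c::group_add"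
  assumes additive: "\<forall>x\<in>carrier G. \<forall>y\<in>carrier G. h (x \<otimes> y) = h x + h y"
    and letters: "e ` A \<subseteq> carrier G" and w: "w \<in> lists A"
  shows "h (word_eval G e w) = (\<Sum>x\<leftarrow>w. h (e x))"
  using w
proof (induction w)
  case Nil
  then show ?case using additive_one[OF additive] by simp
next
  case (Cons x w)
  then have "e x \<in> carrier G" "word_eval G e w \<in> carrier G"
    using letters word_eval_closed by auto
  with Cons additive show ?case by simp
qed

text \<open>Words all of whose letters reach the maximal height \<open>M\<close> of a letter gain height
  as fast as possible, so no shorter word can reach the same element.\<close>
lemma (in monoid) geodesic_if_letters_of_maximal_height:
  fixes h :: "'a \<Rightarrow> 'c::linordered_field"
  assumes additive: "\<forall>x\<in>carrier G. \<forall>y\<in>carrier G. h (x \<otimes> y) = h x + h y"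
    and letters: "e ` A \<subseteq> carrier G"
    and bound: "\<forall>x\<in>A. h (e x) \<le> M" and "0 < M"
    and w: "w \<in> lists A" and maximal: "\<forall>x\<in>set w. h (e x) = M"
  shows "geodesic G A e w"
proof -
  have "(\<Sum>x\<leftarrow>w. h (e x)) = of_nat (length w) * M"
    using maximal by (induction w) (simp_all add: algebra_simps)
  then have height_w: "h (word_eval G e w) = of_nat (length w) * M"
    using additive_word_eval[OF additive letters w] by simp
  have "length w \<le> length u"
    if u: "u \<in> lists A" "word_eval G e u = word_eval G e w" for u
  proof -
    have "of_nat (length w) * M = (\<Sum>x\<leftarrow>u. h (e x))"
      using height_w additive_word_eval[OF additive letters u(1)] u(2) by simp
    also have "\<dots> \<le> (\<Sum>x\<leftarrow>u. M)"
      using u(1) bound by (intro sum_list_mono) auto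
    also have "\<dots> = of_nat (length u) * M" by (simp add: sum_list_triv)
    finally show ?thesis using \<open>0 < M\<close> by simp
  qed
  then have "word_length G A e (word_eval G e w) = length w"
    unfolding word_length_def using w by (intro Least_equality) blast+
  with w show ?thesis by (simp add: geodesic_def)
qed

lemma geodesic_growth_ge_two_pow:
  assumes "finite A" "a \<in> A" "b \<in> A" "a \<noteq> b"
    and geodesic: "\<And>w. set w \<subseteq> {a, b} \<Longrightarrow> geodesic G A e w"
  shows "2 ^ n \<le> geodesic_growth G A e n"
proof -
  have "2 ^ n = card {w. set w \<subseteq> {a, b} \<and> length w = n}"
    using card_lists_length_eq[of "{a, b}" n] \<open>a \<noteq> b\<close> by (simp add: numeral_2_eq_2)
  also have "\<dots> \<le> card {w. geodesic G A e w \<and> length w \<le> n}"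
  proof (rule card_mono)
    show "finite {w. geodesic G A e w \<and> length w \<le> n}"
      using finite_lists_length_le[OF \<open>finite A\<close>, of n]
      by (rule finite_subset[rotated]) (auto simp: geodesic_def)
    show "{w. set w \<subseteq> {a, b} \<and> length w = n} \<subseteq> {w. geodesic G A e w \<and> length w \<le> n}"
      using geodesic by auto
  qed
  finally show ?thesis by (simp add: geodesic_growth_def)
qed

definition Z2_linear_form :: "'b::comm_ring_1 \<Rightarrow> 'b \<Rightarrow> int \<times> int \<Rightarrow> 'b" where
  "Z2_linear_form \<alpha> \<beta> z = \<alpha> * of_int (fst z) + \<beta> * of_int (snd z)"

lemma carrier_Z2_group [simp]: "carrier Z2_group = UNIV"
  by (simp add: Z2_group_def)

lemma Z2_linear_form_mult:
  "Z2_linear_form \<alpha> \<beta> (x \<otimes>\<^bsub>Z2_group\<^esub> y) = Z2_linear_form \<alpha> \<beta> x + Z2_linear_form \<alpha> \<beta> y"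
  by (simp add: Z2_group_def mult_DirProd' Z2_linear_form_def algebra_simps)

locale Z2_quotient_alphabet =
  fixes G :: "('a, 'm) monoid_scheme" and A :: "'x set" and e :: "'x \<Rightarrow> 'a"
    and \<phi> :: "'a \<Rightarrow> int \<times> int"
  assumes group: "group G"
    and alphabet: "fin_sym_gen_alphabet G A e"
    and epi: "\<phi> \<in> epi G Z2_group"
begin

abbreviation height :: "real \<Rightarrow> real \<Rightarrow> 'a \<Rightarrow> real" where
  "height \<alpha> \<beta> g \<equiv> Z2_linear_form \<alpha> \<beta> (\<phi> g)"

lemma phi_hom: "\<phi> \<in> hom G Z2_group" and phi_surj: "\<phi> ` carrier G = UNIV"
  using epi by (simp_all add: epi_def)

lemma height_additive:
  "\<forall>x\<in>carrier G. \<forall>y\<in>carrier G. height \<alpha> \<beta> (x \<otimes>\<^bsub>G\<^esub> y) = height \<alpha> \<beta> x + height \<alpha> \<beta> y"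
  by (simp add: hom_mult[OF phi_hom] Z2_linear_form_mult)

lemma letters_closed: "e ` A \<subseteq> carrier G"
  using alphabet by (simp add: fin_sym_gen_alphabet_def)

lemma height_word_eval:
  "w \<in> lists A \<Longrightarrow> height \<alpha> \<beta> (word_eval G e w) = (\<Sum>x\<leftarrow>w. height \<alpha> \<beta> (e x))"
  using group.is_monoid[OF group] height_additive letters_closed by (rule monoid.additive_word_eval)

lemma height_inverse_letter:
  assumes "x \<in> A"
  shows "\<exists>y\<in>A. \<forall>\<alpha> \<beta>. height \<alpha> \<beta> (e y) = - height \<alpha> \<beta> (e x)"
proof -
  obtain y where y: "y \<in> A" "e y = inv\<^bsub>G\<^esub> (e x)"
    using alphabet assms by (auto simp: fin_sym_gen_alphabet_def)
  have "e y \<otimes>\<^bsub>G\<^esub> e x = \<one>\<^bsub>G\<^esub>"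
    using y assms letters_closed group by (auto intro: group.l_inv)
  then have "height \<alpha> \<beta> (e y) + height \<alpha> \<beta> (e x) = 0" for \<alpha> \<beta>
    using height_additive[of \<alpha> \<beta>] letters_closed y assms
      monoid.additive_one[OF group.is_monoid[OF group] height_additive]
    by (metis image_subset_iff)
  with y(1) show ?thesis by (auto simp: eq_neg_iff_add_eq_0)
qed

lemma height_spanning:
  assumes "\<forall>x\<in>A. height \<alpha> \<beta> (e x) = 0"
  shows "\<alpha> = 0 \<and> \<beta> = 0"
proof -
  have "Z2_linear_form \<alpha> \<beta> z = 0" for z
  proof -
    obtain g where g: "g \<in> carrier G" "\<phi> g = z"
      using phi_surj by (metis UNIV_I imageE)
    then obtain w where w: "w \<in> lists A" "word_eval G e w = g"
      using alphabet unfolding fin_sym_gen_alphabet_def by blast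
    with g have "Z2_linear_form \<alpha> \<beta> z = (\<Sum>x\<leftarrow>w. height \<alpha> \<beta> (e x))"
      using height_word_eval by auto
    also have "\<dots> = 0" using w(1) assms by (induction w) auto
    finally show ?thesis .
  qed
  from this[of "(1, 0)"] this[of "(0, 1)"] show ?thesis by (simp add: Z2_linear_form_def)
qed

lemma two_letters_of_maximal_height:
  obtains a b t where "a \<in> A" "b \<in> A" "a \<noteq> b" "0 < height 1 t (e a)"
    "height 1 t (e b) = height 1 t (e a)" "\<forall>x\<in>A. height 1 t (e x) \<le> height 1 t (e a)"
proof -
  define pt where "pt x = (real_of_int (fst (\<phi> (e x))), real_of_int (snd (\<phi> (e x))))" for x
  have height_pt: "height \<alpha> \<beta> (e x) = \<alpha> * fst (pt x) + \<beta> * snd (pt x)" for \<alpha> \<beta> x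
    by (simp add: pt_def Z2_linear_form_def)
  define P where "P = pt ` A"
  have "finite P" using alphabet by (simp add: P_def fin_sym_gen_alphabet_def)
  have symmetric: "\<forall>r\<in>P. (- fst r, - snd r) \<in> P"
  proof
    fix r assume "r \<in> P"
    then obtain x where x: "x \<in> A" "r = pt x" by (auto simp: P_def)
    obtain y where y: "y \<in> A" "\<forall>\<alpha> \<beta>. height \<alpha> \<beta> (e y) = - height \<alpha> \<beta> (e x)"
      using height_inverse_letter[OF x(1)] by blast
    from y(2)[rule_format, of 1 0] y(2)[rule_format, of 0 1] x have "(- fst r, - snd r) = pt y"
      by (simp add: height_pt prod_eq_iff)
    with y(1) show "(- fst r, - snd r) \<in> P" by (simp add: P_def)
  qed
  have spanning: "\<forall>\<alpha> \<beta>. (\<forall>r\<in>P. \<alpha> * fst r + \<beta> * snd r = 0) \<longrightarrow> \<alpha> = 0 \<and> \<beta> = 0"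
  proof (intro allI impI)
    fix \<alpha> \<beta> assume "\<forall>r\<in>P. \<alpha> * fst r + \<beta> * snd r = 0"
    then have "\<forall>x\<in>A. height \<alpha> \<beta> (e x) = 0" by (simp add: P_def height_pt)
    then show "\<alpha> = 0 \<and> \<beta> = 0" by (rule height_spanning)
  qed
  have "\<exists>r\<in>P. snd r \<noteq> 0"
  proof (rule ccontr)
    assume "\<not> (\<exists>r\<in>P. snd r \<noteq> 0)"
    then show False using spanning[rule_format, of 0 1] by simp
  qed
  then obtain r where r: "r \<in> P" "snd r \<noteq> 0" by blast
  then have "snd r \<noteq> snd (- fst r, - snd r)" "(- fst r, - snd r) \<in> P"
    using symmetric by simp_all
  then obtain t p q where pq: "p \<in> P" "q \<in> P" "p \<noteq> q"
      "fst q + t * snd q = fst p + t * snd p"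
      and supporting: "\<forall>r\<in>P. fst r + t * snd r \<le> fst p + t * snd p"
    using supporting_line_through_two_points[OF \<open>finite P\<close> r(1)] by blast
  have "0 < fst p + t * snd p"
    using symmetric spanning supporting by (rule supporting_value_pos)
  moreover obtain a b where "a \<in> A" "pt a = p" "b \<in> A" "pt b = q"
    using pq(1,2) by (auto simp: P_def)
  moreover have "\<forall>x\<in>A. height 1 t (e x) \<le> fst p + t * snd p"
    using supporting by (simp add: height_pt P_def)
  ultimately show thesis
    using pq(3,4) by (intro that[of a b t]) (auto simp: height_pt)
qed

lemma exponential_geodesic_growth:
  "\<exists>b::real. b > 1 \<and> (\<forall>n. real (geodesic_growth G A e n) \<ge> b ^ n)"
proof -
  obtain a b t where ab: "a \<in> A" "b \<in> A" "a \<noteq> b" and pos: "0 < height 1 t (e a)"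
    and tie: "height 1 t (e b) = height 1 t (e a)"
    and max: "\<forall>x\<in>A. height 1 t (e x) \<le> height 1 t (e a)"
    by (rule two_letters_of_maximal_height)
  have "geodesic G A e w" if "set w \<subseteq> {a, b}" for w
    using group.is_monoid[OF group] height_additive letters_closed max pos
  proof (rule monoid.geodesic_if_letters_of_maximal_height)
    show "w \<in> lists A" "\<forall>x\<in>set w. height 1 t (e x) = height 1 t (e a)"
      using that ab tie by auto
  qed
  then have "2 ^ n \<le> geodesic_growth G A e n" for n
    using alphabet ab by (intro geodesic_growth_ge_two_pow) (auto simp: fin_sym_gen_alphabet_def)
  then have "(2::real) ^ n \<le> real (geodesic_growth G A e n)" for n
    by (metis of_nat_le_iff of_nat_numeral of_nat_power)
  then show ?thesis by (intro exI[of _ 2]) simp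
qed

end

theorem corollary3p2:
  fixes G :: "('a, 'm) monoid_scheme"
  assumes "group G"
    and "finitely_generated_group G"
    and "\<exists>\<phi>. \<phi> \<in> epi G Z2_group"
  shows "\<forall>(A :: 'x set) (e :: 'x \<Rightarrow> 'a). fin_sym_gen_alphabet G A e \<longrightarrow>
           (\<exists>b::real. b > 1 \<and> (\<forall>n. real (geodesic_growth G A e n) \<ge> b ^ n))"
proof (intro allI impI)
  fix A :: "'x set" and e :: "'x \<Rightarrow> 'a"
  assume "fin_sym_gen_alphabet G A e"
  moreover obtain \<phi> where "\<phi> \<in> epi G Z2_group" using assms(3) by blast
  ultimately have "Z2_quotient_alphabet G A e \<phi>"
    using assms(1) by (simp add: Z2_quotient_alphabet_def)
  then show "\<exists>b::real. b > 1 \<and> (\<forall>n. real (geodesic_growth G A e n) \<ge> b ^ n)"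
    by (rule Z2_quotient_alphabet.exponential_geodesic_growth)
qed

end
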